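(* Let $A\subset\mathbb{Z}^n$ be a finite set with $0\in A$, let $c_\alpha\in\mathbb{C}^*$ for $\alpha\in A$, and let $\rho:A\to\mathbb{R}$ be the restriction to $A$ of a convex piecewise linear function $\hat\rho$ on $\mathrm{Conv}(A)$ whose maximal domains of linearity define a polyhedral decomposition $\mathcal{P}$ of $\mathrm{Conv}(A)$ with vertex set exactly $A$, all of whose cells are congruent under $GL(n,\mathbb{Z})$ to standard simplices. For $\tau>0$ consider the Laurent polynomial $$f(x_1,\dots,x_n)=\sum_{\alpha\in A}c_\alpha\tau^{\rho(\alpha)}x_1^{\alpha_1}\cdots x_n^{\alpha_n},$$ normalized so that its constant term $c_0\tau^{\rho(0)}$ equals $1$. Assume that $0$ is a vertex of every maximal cell of $\mathcal{P}$. Then, for $\tau$ sufficiently small, all the critical points of $f$ on $(\mathbb{C}^* )^n$ lie in $\mathcal{U}_0$, and the critical values of $f$ converge to $1$ as $\tau\to 0$.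
   Context: The tropicalization of $f$ is $\varphi(\xi)=\max\{\langle\alpha,\xi\rangle-\rho(\alpha)\,|\,\alpha\in A\}$ for $\xi\in\mathbb{R}^n$; $\Gamma\subset\mathbb{R}^n$ is the tropical hypersurface where this maximum is not achieved uniquely, and $\Delta_0$ is the component of $\mathbb{R}^n\setminus\Gamma$ on which the maximum is achieved by $\alpha=0$. The logarithm map is $\mathrm{Log}(x_1,\dots,x_n)=\frac{1}{|\log\tau|}(\log|x_1|,\dots,\log|x_n|)$, and $\mathcal{U}_0=\mathrm{Log}^{-1}(\Delta_0)\subset(\mathbb{C}^* )^n$ is the region where the constant term of $f$ dominates all other monomials of $f$. *)

theory Defs
  imports "HOL-Analysis.Analysis"
begin

text \<open>Lattice points of Z^n are represented as int^'n, points of R^n as real^'n,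
  points of (C^*)^n as complex^'n with all coordinates nonzero.\<close>

definition rvec :: "int^'n \<Rightarrow> real^'n" where
  "rvec v = (\<chi> i. real_of_int (v $ i))"

definition rmat :: "int^'n^'n \<Rightarrow> real^'n^'n" where
  "rmat M = (\<chi> i j. real_of_int (M $ i $ j))"

definition std_simplex :: "'n set \<Rightarrow> (real^'n) set" where
  "std_simplex J = convex hull (insert 0 ((\<lambda>j. axis j 1) ` J))"

definition lattice_congruent :: "(real^'n) set \<Rightarrow> (real^'n) set \<Rightarrow> bool" where
  "lattice_congruent S T \<longleftrightarrow>
     (\<exists>(M::int^'n^'n) (t::int^'n). (det M = 1 \<or> det M = -1) \<and>
        S = (\<lambda>x. rmat M *v x + rvec t) ` T)"

definition lin_domain :: "(real^'n \<Rightarrow> real) \<Rightarrow> (real^'n) set \<Rightarrow> (real^'n) set \<Rightarrow> bool" where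
  "lin_domain g K D \<longleftrightarrow> D \<noteq> {} \<and> D \<subseteq> K \<and> convex D \<and>
     (\<exists>a b. \<forall>x\<in>D. g x = a \<bullet> x + b)"

definition max_lin_domains :: "(real^'n \<Rightarrow> real) \<Rightarrow> (real^'n) set \<Rightarrow> (real^'n) set set" where
  "max_lin_domains g K =
     {D. lin_domain g K D \<and> (\<forall>D'. lin_domain g K D' \<and> D \<subseteq> D' \<longrightarrow> D' = D)}"

definition laurent_f ::
  "(int^'n) set \<Rightarrow> (int^'n \<Rightarrow> complex) \<Rightarrow> (int^'n \<Rightarrow> real) \<Rightarrow> real \<Rightarrow> complex^'n \<Rightarrow> complex" where
  "laurent_f A c \<rho> \<tau> x =
     (\<Sum>\<alpha>\<in>A. c \<alpha> * complex_of_real (\<tau> powr \<rho> \<alpha>) * (\<Prod>i\<in>UNIV. ((x $ i) powi (\<alpha> $ i))))"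

definition torus :: "(complex^'n) set" where
  "torus = {x. \<forall>i. x $ i \<noteq> 0}"

definition critical_point :: "(complex^'n \<Rightarrow> complex) \<Rightarrow> complex^'n \<Rightarrow> bool" where
  "critical_point f x \<longleftrightarrow> (f has_derivative (\<lambda>_. 0)) (at x)"

definition Log_map :: "real \<Rightarrow> complex^'n \<Rightarrow> real^'n" where
  "Log_map \<tau> x = (\<chi> i. ln (norm (x $ i)) / \<bar>ln \<tau>\<bar>)"

text \<open>Delta_0: region of R^n where the maximum in the tropicalization
  phi(xi) = max {<alpha,xi> - rho(alpha)} is attained uniquely by alpha = 0.
  (This set is convex, hence it is the connected component of R^n - Gamma in question.)\<close>
definition Delta0 :: "(int^'n) set \<Rightarrow> (int^'n \<Rightarrow> real) \<Rightarrow> (real^'n) set" where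
  "Delta0 A \<rho> = {\<xi>. \<forall>\<alpha>\<in>A. \<alpha> \<noteq> 0 \<longrightarrow> rvec \<alpha> \<bullet> \<xi> - \<rho> \<alpha> < rvec 0 \<bullet> \<xi> - \<rho> 0}"

definition U0 :: "(int^'n) set \<Rightarrow> (int^'n \<Rightarrow> real) \<Rightarrow> real \<Rightarrow> (complex^'n) set" where
  "U0 A \<rho> \<tau> = {x \<in> torus. Log_map \<tau> x \<in> Delta0 A \<rho>}"

end

theory Submission
  imports Defs
begin

text \<open>
  At \<open>x \<in> torus\<close> the monomial \<open>\<alpha>\<close> of \<open>f\<close> has modulus \<open>|c \<alpha>| * \<tau> powr (- W \<alpha>)\<close>, where
  \<open>W \<alpha> = \<langle>\<alpha>, Log x\<rangle> - \<rho> \<alpha>\<close> is the corresponding term of the tropicalization. The exponents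
  maximizing \<open>W\<close> lie in a domain of linearity of \<open>\<rho>h\<close>, hence in one unimodular simplex with
  vertex \<open>0\<close>, so the nonzero ones are linearly independent; by Farkas' lemma the same holds
  for the exponents within some fixed \<open>\<eta> > 0\<close> of the maximum. At a critical point the Euler
  relations \<open>\<Sum>\<alpha>. \<alpha>\<^sub>j * (monomial \<alpha>) = 0\<close>, paired with a linear functional dual to an
  \<open>\<eta>/2\<close>-near maximizer \<open>\<beta> \<noteq> 0\<close>, bound the monomial \<open>\<beta>\<close> by the monomials outside the
  \<open>\<eta>\<close>-near maximizers, which are smaller by a factor \<open>\<tau> powr (\<eta>/2)\<close>. For small \<open>\<tau>\<close> this
  is impossible, so \<open>0\<close> is the only near maximizer: \<open>Log x \<in> Delta0\<close>, and every nonconstant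
  monomial is \<open>O(\<tau> powr (\<eta>/2))\<close>, so \<open>f x \<rightarrow> 1\<close>.
\<close>


section \<open>Lattice simplices and domains of linearity\<close>

lemma rvec_0 [simp]: "rvec 0 = 0"
  by (simp add: rvec_def vec_eq_iff)

lemma rvec_eq_iff [simp]: "rvec a = rvec b \<longleftrightarrow> a = b"
  by (simp add: rvec_def vec_eq_iff)

lemma rvec_eq_0_iff [simp]: "rvec a = 0 \<longleftrightarrow> a = 0"
  using rvec_eq_iff[of a 0] by simp

lemma det_rmat: "det (rmat M) = real_of_int (det M)"
  unfolding det_def rmat_def by (simp add: of_int_sum of_int_prod)

lemma lattice_congruent_std_simplex_is_simplex:
  fixes D :: "(real^'n) set"
  assumes "lattice_congruent D (std_simplex J)"
  shows "\<exists>G. finite G \<and> \<not> affine_dependent G \<and> D = convex hull G"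
proof -
  obtain M t where det: "det M = 1 \<or> det M = -1"
    and D: "D = (\<lambda>x. rmat M *v x + rvec t) ` std_simplex J"
    using assms unfolding lattice_congruent_def by blast
  define L where "L = (\<lambda>x::real^'n. rmat M *v x)"
  define B where "B = (\<lambda>j. axis j (1::real)) ` J"
  have linL: "linear L" unfolding L_def by (simp add: matrix_vector_mul_linear)
  have "invertible (rmat M)" using det by (auto simp: det_rmat invertible_det_nz)
  then have injL: "inj L" unfolding L_def
    by (metis inj_matrix_vector_mult invertible_left_inverse)
  have "independent B"
    by (rule independent_mono[OF independent_Basis]) (auto simp: B_def Basis_vec_def)
  then have "independent (L ` B)"
    using injL linL by (meson inj_on_subset subset_UNIV linear_independent_injective_image)
  moreover have "0 \<notin> B" by (auto simp: B_def axis_eq_0_iff)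
  then have "0 \<notin> L ` B" using injL linL
    by (metis image_iff inj_eq linear_0)
  ultimately have "\<not> affine_dependent (L ` insert 0 B)"
    by (simp add: affine_dependent_iff_dependent linear_0[OF linL])
  then have "\<not> affine_dependent ((\<lambda>x. rvec t + x) ` L ` insert 0 B)"
    by (metis affine_dependent_translation_eq)
  moreover have "D = (\<lambda>x. rvec t + x) ` L ` (convex hull (insert 0 B))"
    unfolding D std_simplex_def B_def L_def by (auto simp: image_image add.commute)
  then have "D = convex hull ((\<lambda>x. rvec t + x) ` L ` insert 0 B)"
    by (simp only: convex_hull_linear_image[OF linL] convex_hull_translation)
  ultimately show ?thesis
    by (intro exI[of _ "(\<lambda>x. rvec t + x) ` L ` insert 0 B"]) (simp add: B_def)
qed

lemma independent_Diff_zero_if_affine_independent: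
  fixes G :: "'a::real_vector set"
  assumes "\<not> affine_dependent G" "0 \<in> G"
  shows "independent (G - {0})"
proof -
  have "\<not> affine_dependent (insert 0 (G - {0}))"
    using assms by (metis insert_Diff)
  then show ?thesis
    using affine_dependent_iff_dependent[of 0 "G - {0}"] by simp
qed

lemma extreme_point_of_common_face:
  assumes "(D' \<inter> D) face_of D'" "(D \<inter> D') face_of D"
    and "v extreme_point_of D'" "v \<in> D"
  shows "v extreme_point_of D"
proof -
  have "v extreme_point_of (D' \<inter> D)"
    using assms(3,4) extreme_point_of_face[OF assms(1)] by (auto simp: extreme_point_of_def)
  then show ?thesis
    using extreme_point_of_face[OF assms(2)] by (simp add: Int_commute)
qed

lemma affine_functions_agree_on_affine_hull:
  fixes a a' :: "'a::real_inner"
  assumes "\<forall>x\<in>S. a \<bullet> x + b = a' \<bullet> x + b'" "y \<in> affine hull S"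
  shows "a \<bullet> y + b = a' \<bullet> y + b'"
proof -
  have "S \<subseteq> {x. (a - a') \<bullet> x = b' - b}"
    using assms(1) by (auto simp: inner_diff_left algebra_simps)
  then have "affine hull S \<subseteq> {x. (a - a') \<bullet> x = b' - b}"
    by (simp add: hull_minimal affine_hyperplane)
  then show ?thesis using assms(2) by (auto simp: inner_diff_left algebra_simps)
qed

lemma affine_representation_extends:
  fixes g :: "'a::euclidean_space \<Rightarrow> real"
  assumes "C0 \<subseteq> X" "C0 \<noteq> {}" "aff_dim X \<le> aff_dim C0"
    and "\<forall>x\<in>C0. g x = a0 \<bullet> x + b0" "\<forall>x\<in>X. g x = a \<bullet> x + b" "x \<in> X"
  shows "g x = a0 \<bullet> x + b0"
proof -
  have "affine hull C0 = affine hull X"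
    using assms(1-3) aff_dim_subset[OF assms(1)]
    by (intro affine_dim_equal) (auto simp: hull_mono)
  then have "x \<in> affine hull C0" using assms(6) hull_inc by metis
  moreover have "\<forall>y\<in>C0. a0 \<bullet> y + b0 = a \<bullet> y + b" using assms(1,4,5) by force
  ultimately have "a0 \<bullet> x + b0 = a \<bullet> x + b"
    by (intro affine_functions_agree_on_affine_hull)
  then show ?thesis using assms(5,6) by simp
qed

lemma lin_domain_Union_chain:
  fixes g :: "real^'n \<Rightarrow> real"
  assumes ne: "\<C> \<noteq> {}" and dom: "\<And>X. X \<in> \<C> \<Longrightarrow> lin_domain g K X"
    and chain: "\<And>X Y. X \<in> \<C> \<Longrightarrow> Y \<in> \<C> \<Longrightarrow> X \<subseteq> Y \<or> Y \<subseteq> X"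
  shows "lin_domain g K (\<Union>\<C>)"
proof -
  have fin: "finite (aff_dim ` \<C>)"
    by (rule finite_subset[of _ "{-1..int DIM(real^'n)}"])
      (use aff_dim_geq aff_dim_le_DIM in \<open>auto simp del: DIM_cart\<close>)
  then have "Max (aff_dim ` \<C>) \<in> aff_dim ` \<C>" using ne by simp
  then obtain C0 where C0: "C0 \<in> \<C>" and C0_dim: "aff_dim C0 = Max (aff_dim ` \<C>)" by auto
  have C0_max: "aff_dim X \<le> aff_dim C0" if "X \<in> \<C>" for X
    using C0_dim fin that by simp
  obtain a0 b0 where ab0: "\<forall>x\<in>C0. g x = a0 \<bullet> x + b0"
    using dom[OF C0] unfolding lin_domain_def by blast
  have affine_on_member: "g x = a0 \<bullet> x + b0" if X: "X \<in> \<C>" and x: "x \<in> X" for X x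
  proof (cases "X \<subseteq> C0")
    case True then show ?thesis using ab0 x by blast
  next
    case False
    then have "C0 \<subseteq> X" using chain C0 X by blast
    moreover obtain a b where "\<forall>x\<in>X. g x = a \<bullet> x + b"
      using dom[OF X] unfolding lin_domain_def by blast
    moreover have "C0 \<noteq> {}" using dom[OF C0] unfolding lin_domain_def by blast
    ultimately show ?thesis using affine_representation_extends C0_max[OF X] ab0 x by blast
  qed
  have "convex (\<Union>\<C>)"
  proof (rule convexI)
    fix x y :: "real^'n" and u v :: real
    assume "x \<in> \<Union>\<C>" "y \<in> \<Union>\<C>" and uv: "0 \<le> u" "0 \<le> v" "u + v = 1"
    then obtain X Y where XY: "X \<in> \<C>" "Y \<in> \<C>" "x \<in> X" "y \<in> Y" by blast
    then have "\<exists>Z\<in>\<C>. x \<in> Z \<and> y \<in> Z" using chain by blast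
    then obtain Z where Z: "Z \<in> \<C>" "x \<in> Z" "y \<in> Z" by blast
    moreover have "convex Z" using dom[OF Z(1)] unfolding lin_domain_def by blast
    ultimately have "u *\<^sub>R x + v *\<^sub>R y \<in> Z" using uv convexD by blast
    then show "u *\<^sub>R x + v *\<^sub>R y \<in> \<Union>\<C>" using Z(1) by blast
  qed
  moreover have "\<Union>\<C> \<subseteq> K" using dom unfolding lin_domain_def by blast
  moreover have "\<Union>\<C> \<noteq> {}" using dom[OF C0] C0 unfolding lin_domain_def by blast
  ultimately show ?thesis
    unfolding lin_domain_def
    by (intro conjI exI[of _ a0] exI[of _ b0]) (auto intro: affine_on_member)
qed

lemma lin_domain_subset_max_lin_domain:
  fixes g :: "real^'n \<Rightarrow> real"
  assumes "lin_domain g K C"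
  shows "\<exists>D\<in>max_lin_domains g K. C \<subseteq> D"
proof -
  define \<A> where "\<A> = {D. lin_domain g K D \<and> C \<subseteq> D}"
  have "\<A> \<noteq> {}" using assms unfolding \<A>_def by blast
  moreover have "\<Union>\<C> \<in> \<A>" if ne: "\<C> \<noteq> {}" and ch: "subset.chain \<A> \<C>" for \<C>
  proof -
    have sub: "\<C> \<subseteq> \<A>" and tot: "\<And>X Y. X \<in> \<C> \<Longrightarrow> Y \<in> \<C> \<Longrightarrow> X \<subseteq> Y \<or> Y \<subseteq> X"
      using ch unfolding subset.chain_def by auto
    have "lin_domain g K (\<Union>\<C>)"
      by (rule lin_domain_Union_chain[OF ne]) (use sub tot in \<open>auto simp: \<A>_def\<close>)
    moreover have "C \<subseteq> \<Union>\<C>" using sub ne unfolding \<A>_def by blast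
    ultimately show ?thesis unfolding \<A>_def by blast
  qed
  ultimately obtain M where M: "M \<in> \<A>" and M_max: "\<forall>X\<in>\<A>. M \<subseteq> X \<longrightarrow> X = M"
    by (meson subset_Zorn_nonempty)
  have "M \<in> max_lin_domains g K"
    unfolding max_lin_domains_def
  proof (intro CollectI conjI allI impI)
    show "lin_domain g K M" using M unfolding \<A>_def by blast
    fix D' assume "lin_domain g K D' \<and> M \<subseteq> D'"
    then have "D' \<in> \<A>" using M unfolding \<A>_def by blast
    then show "D' = M" using M_max \<open>lin_domain g K D' \<and> M \<subseteq> D'\<close> by blast
  qed
  then show ?thesis using M unfolding \<A>_def by blast
qed

lemma lin_domain_contact_set:
  fixes g :: "real^'n \<Rightarrow> real"
  assumes "convex K" "convex_on K g" and below: "\<forall>y\<in>K. a \<bullet> y + b \<le> g y"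
    and "{y\<in>K. g y = a \<bullet> y + b} \<noteq> {}"
  shows "lin_domain g K {y\<in>K. g y = a \<bullet> y + b}"
proof -
  have "convex {y\<in>K. g y = a \<bullet> y + b}"
    unfolding convex_alt
  proof (intro ballI allI impI)
    fix y1 y2 and t :: real
    assume y: "y1 \<in> {y\<in>K. g y = a \<bullet> y + b}" "y2 \<in> {y\<in>K. g y = a \<bullet> y + b}"
      and t: "0 \<le> t \<and> t \<le> 1"
    let ?p = "(1 - t) *\<^sub>R y1 + t *\<^sub>R y2"
    have "?p \<in> K" using y t \<open>convex K\<close> unfolding convex_alt by blast
    have "g ?p \<le> (1 - t) * g y1 + t * g y2"
      using convex_onD[OF \<open>convex_on K g\<close>] t y by blast
    also have "\<dots> = a \<bullet> ?p + b"
      using y by (simp add: algebra_simps inner_add_right)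
    finally have "g ?p \<le> a \<bullet> ?p + b" .
    moreover have "a \<bullet> ?p + b \<le> g ?p" using below \<open>?p \<in> K\<close> by blast
    ultimately show "?p \<in> {y\<in>K. g y = a \<bullet> y + b}" using \<open>?p \<in> K\<close> by simp
  qed
  then show ?thesis
    using assms(4) unfolding lin_domain_def by (intro conjI exI[of _ a] exI[of _ b]) auto
qed

lemma convex_on_affine_function:
  fixes a :: "'a::real_inner"
  assumes "convex S"
  shows "convex_on S (\<lambda>x. a \<bullet> x + b)"
  using assms by (intro convex_onI) (simp_all add: inner_add_right algebra_simps)

lemma affine_minorant_of_piecewise_affine:
  fixes g :: "'a::real_inner \<Rightarrow> real"
  assumes cover: "\<Union>P = K"
    and cells: "\<And>D. D \<in> P \<Longrightarrow> \<exists>G. D = convex hull G \<and> G \<subseteq> V \<and> (\<exists>a b. \<forall>x\<in>D. g x = a \<bullet> x + b)"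
    and below: "\<forall>v\<in>V. c \<bullet> v + d \<le> g v"
    and "y \<in> K"
  shows "c \<bullet> y + d \<le> g y"
proof -
  obtain D where D: "D \<in> P" "y \<in> D" using cover \<open>y \<in> K\<close> by blast
  then obtain G a b where G: "D = convex hull G" "G \<subseteq> V" and ab: "\<forall>x\<in>D. g x = a \<bullet> x + b"
    using cells by blast
  have "convex_on (convex hull G) (\<lambda>x. (c - a) \<bullet> x + (d - b))"
    by (rule convex_on_affine_function) simp
  moreover have "\<forall>x\<in>G. (c - a) \<bullet> x + (d - b) \<le> 0"
    using below ab G hull_subset[of G convex] by (force simp: inner_diff_left)
  ultimately have "(c - a) \<bullet> y + (d - b) \<le> 0"
    using convex_on_convex_hull_bound D G(1) by blast
  then show ?thesis using ab D(2) by (simp add: inner_diff_left)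
qed

section \<open>Maximizers of the tropical terms\<close>

definition trop_term :: "(int^'n \<Rightarrow> real) \<Rightarrow> real^'n \<Rightarrow> int^'n \<Rightarrow> real" where
  "trop_term \<rho> \<xi> \<alpha> = rvec \<alpha> \<bullet> \<xi> - \<rho> \<alpha>"

definition near_max :: "(int^'n) set \<Rightarrow> (int^'n \<Rightarrow> real) \<Rightarrow> real \<Rightarrow> real^'n \<Rightarrow> (int^'n) set" where
  "near_max A \<rho> \<eta> \<xi> = {\<alpha>\<in>A. \<forall>\<gamma>\<in>A. trop_term \<rho> \<xi> \<gamma> \<le> trop_term \<rho> \<xi> \<alpha> + \<eta>}"

lemma near_max_mono: "\<eta> \<le> \<eta>' \<Longrightarrow> near_max A \<rho> \<eta> \<xi> \<subseteq> near_max A \<rho> \<eta>' \<xi>"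
  unfolding near_max_def by force

lemma subset_near_max_iff:
  assumes "S \<subseteq> A"
  shows "S \<subseteq> near_max A \<rho> \<eta> \<xi> \<longleftrightarrow>
    (\<forall>p\<in>S \<times> A. (rvec (snd p) - rvec (fst p)) \<bullet> \<xi> \<le> \<rho> (snd p) - \<rho> (fst p) + \<eta>)"
proof -
  have "trop_term \<rho> \<xi> \<gamma> \<le> trop_term \<rho> \<xi> \<alpha> + \<eta> \<longleftrightarrow>
      (rvec \<gamma> - rvec \<alpha>) \<bullet> \<xi> \<le> \<rho> \<gamma> - \<rho> \<alpha> + \<eta>" for \<alpha> \<gamma>
    by (auto simp: trop_term_def inner_diff_left)
  then show ?thesis using assms unfolding near_max_def by fastforce
qed

lemma origin_strictly_dominant:
  assumes "finite A" "0 \<in> A" "0 \<le> \<delta>" and far: "\<forall>\<beta>\<in>A - {0}. \<beta> \<notin> near_max A \<rho> \<delta> \<xi>"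
  shows "\<forall>\<beta>\<in>A - {0}. trop_term \<rho> \<xi> \<beta> + \<delta> < trop_term \<rho> \<xi> 0"
proof -
  obtain \<mu> where "\<mu> \<in> A" and \<mu>_max: "\<forall>\<gamma>\<in>A. trop_term \<rho> \<xi> \<gamma> \<le> trop_term \<rho> \<xi> \<mu>"
    using Max_in[of "trop_term \<rho> \<xi> ` A"] Max_ge[of "trop_term \<rho> \<xi> ` A"] assms(1,2) by fastforce
  then have "\<mu> \<in> near_max A \<rho> \<delta> \<xi>" using assms(3) unfolding near_max_def by force
  then have "\<mu> = 0" using far \<open>\<mu> \<in> A\<close> by blast
  show ?thesis
  proof
    fix \<beta> assume "\<beta> \<in> A - {0}"
    then obtain \<gamma> where "\<gamma> \<in> A" "trop_term \<rho> \<xi> \<beta> + \<delta> < trop_term \<rho> \<xi> \<gamma>"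
      using far unfolding near_max_def by force
    then show "trop_term \<rho> \<xi> \<beta> + \<delta> < trop_term \<rho> \<xi> 0"
      using \<mu>_max \<open>\<mu> = 0\<close> by force
  qed
qed

lemma max_lin_domain_is_simplex:
  assumes "D \<in> max_lin_domains g K"
    and "\<forall>F. F face_of D \<and> F \<noteq> {} \<longrightarrow> (\<exists>J. lattice_congruent F (std_simplex J))"
  shows "\<exists>G. \<not> affine_dependent G \<and> D = convex hull G"
proof -
  have "D face_of D" "D \<noteq> {}"
    using assms(1) unfolding max_lin_domains_def lin_domain_def by (auto intro: face_of_refl)
  then show ?thesis using assms(2) lattice_congruent_std_simplex_is_simplex by blast
qed

lemma tropical_minorant:
  fixes A :: "(int^'n) set" and \<rho> :: "int^'n \<Rightarrow> real" and \<rho>h :: "real^'n \<Rightarrow> real"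
  defines "P \<equiv> max_lin_domains \<rho>h (convex hull (rvec ` A))"
  assumes rho_restr: "\<forall>\<alpha>\<in>A. \<rho> \<alpha> = \<rho>h (rvec \<alpha>)"
    and pl_cover: "\<Union>P = convex hull (rvec ` A)"
    and vertices: "(\<Union>D\<in>P. {v. v extreme_point_of D}) = rvec ` A"
    and unimodular: "\<forall>D\<in>P. \<forall>F. F face_of D \<and> F \<noteq> {} \<longrightarrow>
                       (\<exists>J. lattice_congruent F (std_simplex J))"
    and max: "\<forall>\<gamma>\<in>A. trop_term \<rho> \<xi> \<gamma> \<le> M"
    and "y \<in> convex hull (rvec ` A)"
  shows "\<xi> \<bullet> y + - M \<le> \<rho>h y"
proof (rule affine_minorant_of_piecewise_affine[OF pl_cover _ _ assms(7)])
  fix D assume "D \<in> P"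
  then obtain G where "\<not> affine_dependent G" "D = convex hull G"
    using max_lin_domain_is_simplex unimodular unfolding P_def by blast
  moreover have "G \<subseteq> rvec ` A"
    using extreme_point_of_convex_hull_affine_independent[OF calculation(1)] calculation(2)
      vertices \<open>D \<in> P\<close> by blast
  moreover have "\<exists>a b. \<forall>x\<in>D. \<rho>h x = a \<bullet> x + b"
    using \<open>D \<in> P\<close> unfolding P_def max_lin_domains_def lin_domain_def by blast
  ultimately show "\<exists>G. D = convex hull G \<and> G \<subseteq> rvec ` A \<and> (\<exists>a b. \<forall>x\<in>D. \<rho>h x = a \<bullet> x + b)"
    by blast
next
  show "\<forall>v\<in>rvec ` A. \<xi> \<bullet> v + - M \<le> \<rho>h v"
    using max rho_restr unfolding trop_term_def by (force simp: inner_commute)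
qed

lemma maximizers_in_one_cell:
  fixes A :: "(int^'n) set" and \<rho> :: "int^'n \<Rightarrow> real" and \<rho>h :: "real^'n \<Rightarrow> real"
  defines "K \<equiv> convex hull (rvec ` A)"
  defines "P \<equiv> max_lin_domains \<rho>h K"
  assumes rho_restr: "\<forall>\<alpha>\<in>A. \<rho> \<alpha> = \<rho>h (rvec \<alpha>)"
    and convex_rho: "convex_on K \<rho>h"
    and pl_cover: "\<Union>P = K"
    and vertices: "(\<Union>D\<in>P. {v. v extreme_point_of D}) = rvec ` A"
    and unimodular: "\<forall>D\<in>P. \<forall>F. F face_of D \<and> F \<noteq> {} \<longrightarrow>
                       (\<exists>J. lattice_congruent F (std_simplex J))"
    and "\<alpha>0 \<in> near_max A \<rho> 0 \<xi>"
  shows "\<exists>D\<in>P. rvec ` near_max A \<rho> 0 \<xi> \<subseteq> D"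
proof -
  define M where "M = trop_term \<rho> \<xi> \<alpha>0"
  have A_trop: "\<forall>\<gamma>\<in>A. trop_term \<rho> \<xi> \<gamma> \<le> M"
    using assms(8) unfolding near_max_def M_def by auto
  define Z where "Z = {y\<in>K. \<rho>h y = \<xi> \<bullet> y + - M}"
  have sub_Z: "rvec ` near_max A \<rho> 0 \<xi> \<subseteq> Z"
  proof
    fix v assume "v \<in> rvec ` near_max A \<rho> 0 \<xi>"
    then obtain \<alpha> where \<alpha>: "v = rvec \<alpha>" "\<alpha> \<in> near_max A \<rho> 0 \<xi>" by blast
    then have "\<alpha> \<in> A" "trop_term \<rho> \<xi> \<alpha>0 \<le> trop_term \<rho> \<xi> \<alpha>"
      using assms(8) unfolding near_max_def by auto
    then have "trop_term \<rho> \<xi> \<alpha> = M" using A_trop unfolding M_def by (simp add: order_antisym)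
    then show "v \<in> Z"
      using \<alpha>(1) \<open>\<alpha> \<in> A\<close> rho_restr unfolding Z_def K_def trop_term_def
      by (auto intro: hull_inc simp: inner_commute)
  qed
  then have "rvec \<alpha>0 \<in> Z" using assms(8) by blast
  have "\<xi> \<bullet> y + - M \<le> \<rho>h y" if "y \<in> K" for y
    using tropical_minorant[of A \<rho> \<rho>h, folded K_def P_def, OF rho_restr pl_cover vertices unimodular
        A_trop that] .
  then have "lin_domain \<rho>h K Z"
    unfolding Z_def using convex_rho \<open>rvec \<alpha>0 \<in> Z\<close>
    by (intro lin_domain_contact_set) (auto simp: K_def Z_def)
  then obtain D where "D \<in> P" "Z \<subseteq> D"
    using lin_domain_subset_max_lin_domain unfolding P_def by blast
  then show ?thesis using sub_Z by blast
qed

lemma maximizers_independent: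
  fixes A :: "(int^'n) set" and \<rho> :: "int^'n \<Rightarrow> real" and \<rho>h :: "real^'n \<Rightarrow> real"
  defines "K \<equiv> convex hull (rvec ` A)"
  defines "P \<equiv> max_lin_domains \<rho>h K"
  assumes rho_restr: "\<forall>\<alpha>\<in>A. \<rho> \<alpha> = \<rho>h (rvec \<alpha>)"
    and convex_rho: "convex_on K \<rho>h"
    and pl_cover: "\<Union>P = K"
    and decomp_faces: "\<forall>D1\<in>P. \<forall>D2\<in>P. (D1 \<inter> D2) face_of D1"
    and vertices: "(\<Union>D\<in>P. {v. v extreme_point_of D}) = rvec ` A"
    and unimodular: "\<forall>D\<in>P. \<forall>F. F face_of D \<and> F \<noteq> {} \<longrightarrow>
                       (\<exists>J. lattice_congruent F (std_simplex J))"
    and zero_vertex: "\<forall>D\<in>P. rvec 0 extreme_point_of D"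
  shows "independent (rvec ` (near_max A \<rho> 0 \<xi> - {0}))"
proof (cases "near_max A \<rho> 0 \<xi> = {}")
  case True then show ?thesis by (simp add: independent_empty)
next
  case False
  then obtain \<alpha>0 where "\<alpha>0 \<in> near_max A \<rho> 0 \<xi>" by blast
  then obtain D where D: "D \<in> P" "rvec ` near_max A \<rho> 0 \<xi> \<subseteq> D"
    using maximizers_in_one_cell[of A \<rho> \<rho>h, folded K_def P_def,
        OF rho_restr convex_rho pl_cover vertices unimodular] by blast
  obtain G where G: "\<not> affine_dependent G" "D = convex hull G"
    using max_lin_domain_is_simplex D(1) unimodular unfolding P_def by blast
  have ext_D: "{v. v extreme_point_of D} = G"
    using extreme_point_of_convex_hull_affine_independent[OF G(1)] G(2) by blast
  have "rvec ` (near_max A \<rho> 0 \<xi> - {0}) \<subseteq> G - {0}"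
  proof
    fix v assume "v \<in> rvec ` (near_max A \<rho> 0 \<xi> - {0})"
    then obtain \<alpha> where \<alpha>: "\<alpha> \<in> near_max A \<rho> 0 \<xi>" "\<alpha> \<noteq> 0" "v = rvec \<alpha>" by blast
    then have "\<alpha> \<in> A" unfolding near_max_def by blast
    then obtain D' where "D' \<in> P" "rvec \<alpha> extreme_point_of D'" using vertices by blast
    then have "rvec \<alpha> extreme_point_of D"
      using extreme_point_of_common_face decomp_faces D \<alpha>(1) by blast
    then show "v \<in> G - {0}" using ext_D \<alpha> by auto
  qed
  moreover have "independent (G - {0})"
    using independent_Diff_zero_if_affine_independent[OF G(1)] zero_vertex D(1) ext_D by auto
  ultimately show ?thesis using independent_mono by blast
qed

section \<open>Farkas' lemma and near maximizers\<close>

lemma nonneg_combination_if_in_convex_cone_hull: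
  fixes f :: "'i \<Rightarrow> 'a::real_vector"
  assumes "finite I" "x \<in> convex_cone hull (f ` I)"
  shows "\<exists>l. (\<forall>i\<in>I. 0 \<le> l i) \<and> x = (\<Sum>i\<in>I. l i *\<^sub>R f i)"
proof -
  define Cx where "Cx = {\<Sum>i\<in>I. l i *\<^sub>R f i | l. \<forall>i\<in>I. 0 \<le> l i}"
  have "convex_cone Cx"
    unfolding convex_cone_iff
  proof (intro conjI ballI allI impI)
    show "0 \<in> Cx" unfolding Cx_def by (auto intro!: exI[of _ "\<lambda>_. 0"])
  next
    fix x y assume "x \<in> Cx" "y \<in> Cx"
    then obtain l l' where "x = (\<Sum>i\<in>I. l i *\<^sub>R f i)" "\<forall>i\<in>I. 0 \<le> l i"
      and "y = (\<Sum>i\<in>I. l' i *\<^sub>R f i)" "\<forall>i\<in>I. 0 \<le> l' i"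
      unfolding Cx_def by blast
    then show "x + y \<in> Cx" unfolding Cx_def
      by (auto intro!: exI[of _ "\<lambda>i. l i + l' i"] simp: scaleR_add_left sum.distrib)
  next
    fix x and c :: real assume "x \<in> Cx" "0 \<le> c"
    then obtain l where "x = (\<Sum>i\<in>I. l i *\<^sub>R f i)" "\<forall>i\<in>I. 0 \<le> l i"
      unfolding Cx_def by blast
    then show "c *\<^sub>R x \<in> Cx" using \<open>0 \<le> c\<close> unfolding Cx_def
      by (auto intro!: exI[of _ "\<lambda>i. c * l i"] simp: scaleR_sum_right)
  qed
  moreover have "f ` I \<subseteq> Cx"
  proof
    fix y assume "y \<in> f ` I"
    then obtain j where "j \<in> I" "y = f j" by blast
    then have "y = (\<Sum>i\<in>I. (if i = j then 1 else 0) *\<^sub>R f i)"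
      using \<open>finite I\<close> by (simp add: if_distrib[of "\<lambda>c. c *\<^sub>R _"] sum.delta cong: if_cong)
    then show "y \<in> Cx" unfolding Cx_def by force
  qed
  ultimately have "convex_cone hull (f ` I) \<subseteq> Cx" by (rule hull_minimal[rotated])
  then show ?thesis using assms(2) unfolding Cx_def by blast
qed

lemma convex_cone_separation_feasible:
  fixes C :: "('a::euclidean_space \<times> real) set"
  assumes "closed C" "convex_cone C" "(0, -1) \<notin> C"
  shows "\<exists>\<xi>. \<forall>(v, t)\<in>C. v \<bullet> \<xi> \<le> t"
proof -
  have "convex C" using assms(2) unfolding convex_cone_def by blast
  then obtain p c where p: "inner p (0, -1) < c" "\<forall>x\<in>C. c < inner p x"
    using separating_hyperplane_closed_point assms(1,3) by blast
  have "c < 0" using p(2) convex_cone_contains_0[OF assms(2)] by auto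
  have nonneg: "0 \<le> inner p x" if "x \<in> C" for x
  proof (rule ccontr)
    assume neg: "\<not> 0 \<le> inner p x"
    have "(c - 1) / inner p x \<ge> 0" using neg \<open>c < 0\<close> by (simp add: divide_nonpos_neg)
    then have "((c - 1) / inner p x) *\<^sub>R x \<in> C" using assms(2) that convex_cone_scaleR by blast
    moreover have "inner p (((c - 1) / inner p x) *\<^sub>R x) = c - 1" using neg by simp
    ultimately show False using p(2) by force
  qed
  have "snd p > 0" using p(1) \<open>c < 0\<close> by (cases p) simp
  have "v \<bullet> (- (1 / snd p)) *\<^sub>R fst p \<le> t" if "(v, t) \<in> C" for v t
  proof -
    have "0 \<le> fst p \<bullet> v + snd p * t" using nonneg[OF that] by (cases p) simp
    then show ?thesis using \<open>snd p > 0\<close> by (simp add: inner_commute field_simps)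
  qed
  then show ?thesis by blast
qed

lemma farkas_lemma:
  fixes a :: "'i \<Rightarrow> 'a::euclidean_space" and b :: "'i \<Rightarrow> real"
  assumes "finite I" and infeasible: "\<not> (\<exists>\<xi>. \<forall>i\<in>I. a i \<bullet> \<xi> \<le> b i)"
  shows "\<exists>l. (\<forall>i\<in>I. 0 \<le> l i) \<and> (\<Sum>i\<in>I. l i *\<^sub>R a i) = 0 \<and> (\<Sum>i\<in>I. l i * b i) < 0"
proof -
  define g where "g = case_option (0, 1) (\<lambda>i. (a i, b i))"
  define J where "J = insert None (Some ` I)"
  have "finite J" using \<open>finite I\<close> unfolding J_def by simp
  define C where "C = convex_cone hull (g ` J)"
  have "(0, -1) \<in> C"
  proof (rule ccontr)
    assume "(0, -1) \<notin> C"
    moreover have "closed C" unfolding C_def using \<open>finite J\<close> by (simp add: closed_convex_cone_hull)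
    moreover have "convex_cone C" unfolding C_def by (rule convex_cone_convex_cone_hull)
    ultimately obtain \<xi> where \<xi>: "\<forall>(v, t)\<in>C. v \<bullet> \<xi> \<le> t"
      using convex_cone_separation_feasible by blast
    have "a i \<bullet> \<xi> \<le> b i" if "i \<in> I" for i
    proof -
      have "g (Some i) \<in> C" using that hull_subset[of "g ` J"] unfolding C_def J_def by blast
      then show ?thesis using \<xi> by (auto simp: g_def)
    qed
    then show False using infeasible by blast
  qed
  then obtain l where l: "\<forall>j\<in>J. 0 \<le> l j" "(0, -1) = (\<Sum>j\<in>J. l j *\<^sub>R g j)"
    using nonneg_combination_if_in_convex_cone_hull[OF \<open>finite J\<close>] unfolding C_def by blast
  have "(\<Sum>j\<in>J. l j *\<^sub>R g j) = (\<Sum>i\<in>I. l (Some i) *\<^sub>R (a i, b i)) + l None *\<^sub>R (0, 1)"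
    using \<open>finite I\<close> unfolding J_def g_def by (simp add: sum.reindex add.commute)
  then have "(\<Sum>i\<in>I. l (Some i) *\<^sub>R a i) = 0" "(\<Sum>i\<in>I. l (Some i) * b i) = -1 - l None"
    using l(2) by (simp_all add: prod_eq_iff fst_sum snd_sum)
  then show ?thesis using l(1) unfolding J_def by (intro exI[of _ "l \<circ> Some"]) auto
qed

lemma infeasible_linear_system_robust:
  fixes a :: "'i \<Rightarrow> 'a::euclidean_space" and b :: "'i \<Rightarrow> real"
  assumes "finite I" and "\<not> (\<exists>\<xi>. \<forall>i\<in>I. a i \<bullet> \<xi> \<le> b i)"
  shows "\<exists>e>0. \<not> (\<exists>\<xi>. \<forall>i\<in>I. a i \<bullet> \<xi> \<le> b i + e)"
proof -
  obtain l where l: "\<forall>i\<in>I. 0 \<le> l i" "(\<Sum>i\<in>I. l i *\<^sub>R a i) = 0" "(\<Sum>i\<in>I. l i * b i) < 0"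
    using farkas_lemma[OF assms] by blast
  define e where "e = - (\<Sum>i\<in>I. l i * b i) / (sum l I + 1)"
  have "sum l I \<ge> 0" using l(1) by (simp add: sum_nonneg)
  then have "e > 0" unfolding e_def using l(3) by (intro divide_pos_pos) linarith+
  moreover have False if "\<forall>i\<in>I. a i \<bullet> \<xi> \<le> b i + e" for \<xi>
  proof -
    \<comment> \<open>the multipliers annihilate the left-hand sides but keep the right-hand sides negative\<close>
    have "0 = (\<Sum>i\<in>I. l i *\<^sub>R a i) \<bullet> \<xi>" using l(2) by simp
    also have "\<dots> = (\<Sum>i\<in>I. l i * (a i \<bullet> \<xi>))" by (simp add: inner_sum_left)
    also have "\<dots> \<le> (\<Sum>i\<in>I. l i * (b i + e))"
      using that l(1) by (intro sum_mono mult_left_mono) auto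
    also have "\<dots> = (\<Sum>i\<in>I. l i * b i) + sum l I * e"
      by (simp add: distrib_left sum.distrib sum_distrib_right)
    also have "\<dots> < 0"
      using \<open>sum l I \<ge> 0\<close> l(3) unfolding e_def by (simp add: field_simps)
    finally show False by simp
  qed
  ultimately show ?thesis by blast
qed

lemma margin_for_non_maximizers:
  assumes "finite A" "S \<subseteq> A" "\<forall>\<xi>. \<not> S \<subseteq> near_max A \<rho> 0 \<xi>"
  shows "\<exists>e>0. \<forall>\<xi>. \<not> S \<subseteq> near_max A \<rho> e \<xi>"
proof -
  have fin: "finite (S \<times> A)" using assms(1,2) by (auto intro: finite_subset)
  have infeasible: "\<not> (\<exists>\<xi>. \<forall>p\<in>S \<times> A. (rvec (snd p) - rvec (fst p)) \<bullet> \<xi> \<le> \<rho> (snd p) - \<rho> (fst p))"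
    using assms(3) subset_near_max_iff[OF assms(2), of \<rho> 0] by simp
  obtain e where "e > 0"
    "\<not> (\<exists>\<xi>. \<forall>p\<in>S \<times> A. (rvec (snd p) - rvec (fst p)) \<bullet> \<xi> \<le> \<rho> (snd p) - \<rho> (fst p) + e)"
    using infeasible_linear_system_robust[OF fin infeasible] by blast
  then show ?thesis using subset_near_max_iff[OF assms(2), of \<rho> e] by blast
qed

lemma near_maximizers_independent:
  fixes A :: "(int^'n) set"
  assumes "finite A" and exact: "\<And>\<xi>. independent (rvec ` (near_max A \<rho> 0 \<xi> - {0}))"
  shows "\<exists>\<eta>>0. \<forall>\<xi>. independent (rvec ` (near_max A \<rho> \<eta> \<xi> - {0}))"
proof -
  define Bad where "Bad = {S. S \<subseteq> A \<and> \<not> independent (rvec ` (S - {0}))}"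
  have "\<exists>e>0. \<forall>\<xi>. \<not> S \<subseteq> near_max A \<rho> e \<xi>" if "S \<in> Bad" for S
  proof (rule margin_for_non_maximizers[OF \<open>finite A\<close>])
    show "S \<subseteq> A" using that unfolding Bad_def by blast
    show "\<forall>\<xi>. \<not> S \<subseteq> near_max A \<rho> 0 \<xi>"
    proof (intro allI notI)
      fix \<xi> assume "S \<subseteq> near_max A \<rho> 0 \<xi>"
      then have "rvec ` (S - {0}) \<subseteq> rvec ` (near_max A \<rho> 0 \<xi> - {0})" by blast
      then have "independent (rvec ` (S - {0}))" using independent_mono exact by blast
      then show False using that unfolding Bad_def by blast
    qed
  qed
  then obtain E where E: "\<forall>S\<in>Bad. E S > 0 \<and> (\<forall>\<xi>. \<not> S \<subseteq> near_max A \<rho> (E S) \<xi>)"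
    using bchoice[of Bad "\<lambda>S e. e > 0 \<and> (\<forall>\<xi>. \<not> S \<subseteq> near_max A \<rho> e \<xi>)"] by blast
  have "finite Bad" using \<open>finite A\<close> unfolding Bad_def by simp
  define \<eta> where "\<eta> = Min (insert 1 (E ` Bad))"
  have "\<eta> > 0" unfolding \<eta>_def using \<open>finite Bad\<close> E by (auto simp: Min_gr_iff)
  moreover have "independent (rvec ` (near_max A \<rho> \<eta> \<xi> - {0}))" for \<xi>
  proof (rule ccontr)
    assume "\<not> ?thesis"
    then have bad: "near_max A \<rho> \<eta> \<xi> \<in> Bad" unfolding Bad_def near_max_def by blast
    then have "\<eta> \<le> E (near_max A \<rho> \<eta> \<xi>)" unfolding \<eta>_def using \<open>finite Bad\<close> by simp
    then have "near_max A \<rho> \<eta> \<xi> \<subseteq> near_max A \<rho> (E (near_max A \<rho> \<eta> \<xi>)) \<xi>"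
      by (rule near_max_mono)
    then show False using E bad by blast
  qed
  ultimately show ?thesis by blast
qed

section \<open>Critical points of the Laurent polynomial\<close>

definition laurent_term ::
  "(int^'n \<Rightarrow> complex) \<Rightarrow> (int^'n \<Rightarrow> real) \<Rightarrow> real \<Rightarrow> complex^'n \<Rightarrow> int^'n \<Rightarrow> complex" where
  "laurent_term c \<rho> \<tau> x \<alpha> = c \<alpha> * complex_of_real (\<tau> powr \<rho> \<alpha>) * (\<Prod>i\<in>UNIV. (x $ i) powi (\<alpha> $ i))"

lemma laurent_f_eq_sum: "laurent_f A c \<rho> \<tau> x = (\<Sum>\<alpha>\<in>A. laurent_term c \<rho> \<tau> x \<alpha>)"
  unfolding laurent_f_def laurent_term_def ..

lemma norm_laurent_term:
  assumes "x \<in> torus" "0 < \<tau>" "\<tau> < 1"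
  shows "norm (laurent_term c \<rho> \<tau> x \<alpha>) = norm (c \<alpha>) * \<tau> powr (- trop_term \<rho> (Log_map \<tau> x) \<alpha>)"
proof -
  define s where "s = (\<Sum>i\<in>UNIV. real_of_int (\<alpha> $ i) * ln (norm (x $ i)))"
  have nz: "norm (x $ i) > 0" for i using assms(1) unfolding torus_def by simp
  have "ln \<tau> < 0" using assms(2,3) by simp
  have "norm (\<Prod>i\<in>UNIV. (x $ i) powi (\<alpha> $ i)) = (\<Prod>i\<in>UNIV. exp (real_of_int (\<alpha> $ i) * ln (norm (x $ i))))"
    unfolding prod_norm[symmetric] norm_power_int
    using nz by (intro prod.cong refl) (simp add: powr_real_of_int'[symmetric] powr_def mult.commute)
  also have "\<dots> = exp s" unfolding s_def by (simp add: exp_sum)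
  finally have "norm (\<Prod>i\<in>UNIV. (x $ i) powi (\<alpha> $ i)) = exp s" .
  moreover have "rvec \<alpha> \<bullet> Log_map \<tau> x = - s / ln \<tau>"
    using \<open>ln \<tau> < 0\<close> unfolding s_def inner_vec_def rvec_def Log_map_def
    by (simp add: sum_divide_distrib sum_negf)
  moreover have "norm (complex_of_real (\<tau> powr \<rho> \<alpha>)) = exp (ln \<tau> * \<rho> \<alpha>)"
    using assms(2) by (simp add: powr_def mult.commute)
  ultimately show ?thesis
    using assms(2) \<open>ln \<tau> < 0\<close>
    by (simp add: laurent_term_def norm_mult trop_term_def powr_def exp_add[symmetric] field_simps)
qed

lemma critical_point_coordinate_derivative:
  fixes f :: "complex^'n \<Rightarrow> complex"
  assumes "critical_point f x"
  shows "((\<lambda>z. f (\<chi> i. if i = j then z else x $ i)) has_field_derivative 0) (at (x $ j))"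
proof -
  define x0 where "x0 = ((\<chi> i. if i = j then 0 else x $ i) :: complex^'n)"
  have line: "(\<chi> i. if i = j then z else x $ i) = x0 + axis j z" for z
    unfolding x0_def by (auto simp: vec_eq_iff axis_def)
  have "linear (\<lambda>z::complex. axis j z :: complex^'n)"
    by (rule linearI) (simp_all add: vec_eq_iff axis_def)
  then have "((\<lambda>z. x0 + axis j z) has_derivative (\<lambda>z. axis j z)) (at (x $ j))"
    using has_derivative_add[OF has_derivative_const linear_imp_has_derivative] by simp
  moreover have "x0 + axis j (x $ j) = x" unfolding x0_def by (simp add: vec_eq_iff axis_def)
  ultimately have "((\<lambda>z. f (x0 + axis j z)) has_derivative (\<lambda>_. 0)) (at (x $ j))"
    using has_derivative_compose assms unfolding critical_point_def by fastforce
  moreover have "(*) (0::complex) = (\<lambda>_. 0)" by auto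
  ultimately show ?thesis unfolding has_field_derivative_def line by simp
qed

lemma laurent_euler_identity:
  fixes A :: "(int^'n) set"
  assumes "finite A" "x \<in> torus" "critical_point (laurent_f A c \<rho> \<tau>) x"
  shows "(\<Sum>\<alpha>\<in>A. of_int (\<alpha> $ j) * laurent_term c \<rho> \<tau> x \<alpha>) = 0"
proof -
  define K where "K \<alpha> = c \<alpha> * complex_of_real (\<tau> powr \<rho> \<alpha>) * (\<Prod>i\<in>UNIV-{j}. (x $ i) powi (\<alpha> $ i))" for \<alpha>
  have split: "(\<Prod>i\<in>UNIV. (y $ i) powi (\<alpha> $ i)) = (y $ j) powi (\<alpha> $ j) * (\<Prod>i\<in>UNIV-{j}. (y $ i) powi (\<alpha> $ i))"
    for y :: "complex^'n" and \<alpha> :: "int^'n"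
    by (simp add: prod.remove)
  have restrict: "laurent_f A c \<rho> \<tau> (\<chi> i. if i = j then z else x $ i) = (\<Sum>\<alpha>\<in>A. K \<alpha> * z powi (\<alpha> $ j))" for z
  proof -
    have "(\<Prod>i\<in>UNIV-{j}. ((\<chi> i. if i = j then z else x $ i) $ i) powi (\<alpha> $ i))
        = (\<Prod>i\<in>UNIV-{j}. (x $ i) powi (\<alpha> $ i))" for \<alpha> :: "int^'n"
      by (rule prod.cong) auto
    then show ?thesis unfolding laurent_f_def K_def split by (simp add: mult_ac)
  qed
  have "x $ j \<noteq> 0" using assms(2) unfolding torus_def by simp
  then have "((\<lambda>z. \<Sum>\<alpha>\<in>A. K \<alpha> * z powi (\<alpha> $ j)) has_field_derivative
      (\<Sum>\<alpha>\<in>A. K \<alpha> * (of_int (\<alpha> $ j) * (x $ j) powi (\<alpha> $ j - 1) * 1))) (at (x $ j))"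
    by (intro DERIV_sum DERIV_cmult DERIV_power_int DERIV_ident) simp
  then have "(\<Sum>\<alpha>\<in>A. K \<alpha> * (of_int (\<alpha> $ j) * (x $ j) powi (\<alpha> $ j - 1) * 1)) = 0"
    using DERIV_unique critical_point_coordinate_derivative[OF assms(3), of j]
    unfolding restrict by blast
  then have "(\<Sum>\<alpha>\<in>A. K \<alpha> * (of_int (\<alpha> $ j) * (x $ j) powi (\<alpha> $ j - 1) * 1)) * x $ j = 0"
    by simp
  also have "(\<Sum>\<alpha>\<in>A. K \<alpha> * (of_int (\<alpha> $ j) * (x $ j) powi (\<alpha> $ j - 1) * 1)) * x $ j
      = (\<Sum>\<alpha>\<in>A. of_int (\<alpha> $ j) * laurent_term c \<rho> \<tau> x \<alpha>)"
    unfolding sum_distrib_right laurent_term_def split K_def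
    using power_int_minus_mult[OF disjI1, OF \<open>x $ j \<noteq> 0\<close>]
    by (intro sum.cong refl) (simp add: mult_ac)
  finally show ?thesis .
qed

lemma laurent_weighted_sum_eq_0:
  assumes "finite A" "x \<in> torus" "critical_point (laurent_f A c \<rho> \<tau>) x"
  shows "(\<Sum>\<alpha>\<in>A. complex_of_real (l \<bullet> rvec \<alpha>) * laurent_term c \<rho> \<tau> x \<alpha>) = 0"
proof -
  have "(\<Sum>\<alpha>\<in>A. complex_of_real (l \<bullet> rvec \<alpha>) * laurent_term c \<rho> \<tau> x \<alpha>)
      = (\<Sum>j\<in>UNIV. complex_of_real (l $ j) * (\<Sum>\<alpha>\<in>A. of_int (\<alpha> $ j) * laurent_term c \<rho> \<tau> x \<alpha>))"
    unfolding inner_vec_def rvec_def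
    by (simp add: sum_distrib_right sum_distrib_left mult_ac sum.swap[of _ A])
  then show ?thesis using laurent_euler_identity[OF assms] by simp
qed

lemma critical_point_term_domination:
  assumes "finite A" "S \<subseteq> A" "\<beta> \<in> S" "l \<bullet> rvec \<beta> = 1" "\<forall>\<alpha>\<in>S-{\<beta>}. l \<bullet> rvec \<alpha> = 0"
    and "x \<in> torus" "critical_point (laurent_f A c \<rho> \<tau>) x"
  shows "norm (laurent_term c \<rho> \<tau> x \<beta>)
    \<le> (\<Sum>\<alpha>\<in>A-S. \<bar>l \<bullet> rvec \<alpha>\<bar> * norm (laurent_term c \<rho> \<tau> x \<alpha>))"
proof -
  let ?m = "laurent_term c \<rho> \<tau> x"
  have "\<beta> \<in> A" using assms(2,3) by blast
  have "0 = (\<Sum>\<alpha>\<in>A. complex_of_real (l \<bullet> rvec \<alpha>) * ?m \<alpha>)"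
    using laurent_weighted_sum_eq_0[OF assms(1,6,7)] by simp
  also have "\<dots> = ?m \<beta> + (\<Sum>\<alpha>\<in>A-{\<beta>}. complex_of_real (l \<bullet> rvec \<alpha>) * ?m \<alpha>)"
    using assms(1,4) \<open>\<beta> \<in> A\<close> by (simp add: sum.remove)
  also have "(\<Sum>\<alpha>\<in>A-{\<beta>}. complex_of_real (l \<bullet> rvec \<alpha>) * ?m \<alpha>)
      = (\<Sum>\<alpha>\<in>A-S. complex_of_real (l \<bullet> rvec \<alpha>) * ?m \<alpha>)"
    using assms(1-3,5) by (intro sum.mono_neutral_right) auto
  finally have "?m \<beta> = - (\<Sum>\<alpha>\<in>A-S. complex_of_real (l \<bullet> rvec \<alpha>) * ?m \<alpha>)"
    by (simp add: eq_neg_iff_add_eq_0)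
  then show ?thesis by (simp add: order_trans[OF norm_sum] norm_mult)
qed

lemma dual_functional_exists:
  fixes B :: "'a::euclidean_space set"
  assumes "independent B" "v \<in> B"
  shows "\<exists>l. l \<bullet> v = 1 \<and> (\<forall>u\<in>B - {v}. l \<bullet> u = 0)"
proof -
  obtain y z where yz: "y \<in> span (B - {v})" "\<And>w. w \<in> span (B - {v}) \<Longrightarrow> orthogonal z w" "v = y + z"
    using orthogonal_subspace_decomp_exists by blast
  have "v \<notin> span (B - {v})" using assms dependent_def by blast
  then have "z \<noteq> 0" using yz by auto
  have "z \<bullet> y = 0" using yz(2)[OF yz(1)] unfolding orthogonal_def .
  define l where "l = (1 / (z \<bullet> z)) *\<^sub>R z"
  have "l \<bullet> v = 1" using \<open>z \<noteq> 0\<close> \<open>z \<bullet> y = 0\<close> yz(3) unfolding l_def by (simp add: inner_add_right)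
  moreover have "l \<bullet> u = 0" if "u \<in> B - {v}" for u
    using yz(2)[OF span_base[OF that]] unfolding l_def orthogonal_def by simp
  ultimately show ?thesis by blast
qed

lemma dual_functionals_uniformly_bounded:
  fixes A :: "(int^'n) set" and w :: "int^'n \<Rightarrow> real"
  assumes "finite A"
  shows "\<exists>C. \<forall>S\<subseteq>A. \<forall>\<beta>\<in>S - {0}. independent (rvec ` (S - {0})) \<longrightarrow>
    (\<exists>l. l \<bullet> rvec \<beta> = 1 \<and> (\<forall>\<alpha>\<in>S - {\<beta>}. l \<bullet> rvec \<alpha> = 0) \<and> (\<Sum>\<alpha>\<in>A. \<bar>l \<bullet> rvec \<alpha>\<bar> * w \<alpha>) \<le> C)"
proof -
  define X where "X = {(S, \<beta>). S \<subseteq> A \<and> \<beta> \<in> S - {0} \<and> independent (rvec ` (S - {0}))}"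
  have "finite X"
    by (rule finite_subset[of _ "Pow A \<times> A"]) (use \<open>finite A\<close> in \<open>auto simp: X_def\<close>)
  have "\<exists>l. l \<bullet> rvec \<beta> = 1 \<and> (\<forall>\<alpha>\<in>S - {\<beta>}. l \<bullet> rvec \<alpha> = 0)" if "(S, \<beta>) \<in> X" for S \<beta>
  proof -
    have "independent (rvec ` (S - {0}))" "rvec \<beta> \<in> rvec ` (S - {0})"
      using that unfolding X_def by auto
    then obtain l where l: "l \<bullet> rvec \<beta> = 1" "\<forall>u\<in>rvec ` (S - {0}) - {rvec \<beta>}. l \<bullet> u = 0"
      using dual_functional_exists by blast
    have "l \<bullet> rvec \<alpha> = 0" if "\<alpha> \<in> S - {\<beta>}" for \<alpha>
      using l(2) that by (cases "\<alpha> = 0") auto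
    then show ?thesis using l(1) by blast
  qed
  then obtain L where L: "\<forall>(S, \<beta>)\<in>X. L (S, \<beta>) \<bullet> rvec \<beta> = 1 \<and> (\<forall>\<alpha>\<in>S - {\<beta>}. L (S, \<beta>) \<bullet> rvec \<alpha> = 0)"
    using bchoice[of X "\<lambda>(S, \<beta>) l. l \<bullet> rvec \<beta> = 1 \<and> (\<forall>\<alpha>\<in>S - {\<beta>}. l \<bullet> rvec \<alpha> = 0)"]
    by (auto simp: case_prod_beta)
  define bound where "bound p = (\<Sum>\<alpha>\<in>A. \<bar>L p \<bullet> rvec \<alpha>\<bar> * w \<alpha>)" for p
  show ?thesis
  proof (intro exI[of _ "Max (bound ` X)"] allI impI ballI)
    fix S \<beta> assume "S \<subseteq> A" "\<beta> \<in> S - {0}" "independent (rvec ` (S - {0}))"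
    then have "(S, \<beta>) \<in> X" unfolding X_def by blast
    then have "bound (S, \<beta>) \<le> Max (bound ` X)" using \<open>finite X\<close> by simp
    then show "\<exists>l. l \<bullet> rvec \<beta> = 1 \<and> (\<forall>\<alpha>\<in>S - {\<beta>}. l \<bullet> rvec \<alpha> = 0) \<and>
        (\<Sum>\<alpha>\<in>A. \<bar>l \<bullet> rvec \<alpha>\<bar> * w \<alpha>) \<le> Max (bound ` X)"
      using L \<open>(S, \<beta>) \<in> X\<close> unfolding bound_def by (intro exI[of _ "L (S, \<beta>)"]) auto
  qed
qed

lemma near_max_term_bound:
  fixes A :: "(int^'n) set"
  assumes "finite A" "0 < \<tau>" "\<tau> < 1" "0 \<le> \<eta>" "x \<in> torus" "critical_point (laurent_f A c \<rho> \<tau>) x"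
    and near: "\<beta> \<in> near_max A \<rho> (\<eta> / 2) (Log_map \<tau> x)"
    and dual: "l \<bullet> rvec \<beta> = 1" "\<forall>\<alpha>\<in>near_max A \<rho> \<eta> (Log_map \<tau> x) - {\<beta>}. l \<bullet> rvec \<alpha> = 0"
  shows "norm (c \<beta>) \<le> (\<Sum>\<alpha>\<in>A. \<bar>l \<bullet> rvec \<alpha>\<bar> * norm (c \<alpha>)) * \<tau> powr (\<eta> / 2)"
proof -
  define \<xi> where "\<xi> = Log_map \<tau> x"
  define S where "S = near_max A \<rho> \<eta> \<xi>"
  let ?m = "laurent_term c \<rho> \<tau> x"
  let ?q = "\<tau> powr (- trop_term \<rho> \<xi> \<beta>)"
  have norm_m: "norm (?m \<alpha>) = norm (c \<alpha>) * \<tau> powr (- trop_term \<rho> \<xi> \<alpha>)" for \<alpha>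
    unfolding \<xi>_def using norm_laurent_term assms(2,3,5) by blast
  note near = near[folded \<xi>_def] and dual = dual[folded \<xi>_def]
  have "S \<subseteq> A" unfolding S_def near_max_def by blast
  have "\<beta> \<in> S" using near near_max_mono[of "\<eta> / 2" \<eta>] \<open>0 \<le> \<eta>\<close> unfolding S_def by auto
  have outside_smaller: "\<tau> powr (- trop_term \<rho> \<xi> \<alpha>) \<le> ?q * \<tau> powr (\<eta> / 2)" if "\<alpha> \<in> A - S" for \<alpha>
  proof -
    have "\<not> (\<forall>\<gamma>\<in>A. trop_term \<rho> \<xi> \<gamma> \<le> trop_term \<rho> \<xi> \<alpha> + \<eta>)"
      using that unfolding S_def near_max_def by blast
    then obtain \<gamma> where "\<gamma> \<in> A" "trop_term \<rho> \<xi> \<gamma> > trop_term \<rho> \<xi> \<alpha> + \<eta>"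
      by (auto simp: not_le)
    then have "- trop_term \<rho> \<xi> \<beta> + \<eta> / 2 \<le> - trop_term \<rho> \<xi> \<alpha>"
      using near unfolding near_max_def by force
    then show ?thesis
      using assms(2,3) by (simp add: powr_mono' powr_add[symmetric])
  qed
  have "norm (?m \<beta>) \<le> (\<Sum>\<alpha>\<in>A-S. \<bar>l \<bullet> rvec \<alpha>\<bar> * norm (?m \<alpha>))"
    by (rule critical_point_term_domination[OF assms(1) \<open>S \<subseteq> A\<close> \<open>\<beta> \<in> S\<close> dual(1) _ assms(5,6)])
      (use dual(2) in \<open>simp add: S_def\<close>)
  then have "norm (c \<beta>) * ?q \<le> (\<Sum>\<alpha>\<in>A-S. \<bar>l \<bullet> rvec \<alpha>\<bar> * (norm (c \<alpha>) * \<tau> powr (- trop_term \<rho> \<xi> \<alpha>)))"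
    by (simp only: norm_m)
  also have "\<dots> \<le> (\<Sum>\<alpha>\<in>A-S. \<bar>l \<bullet> rvec \<alpha>\<bar> * norm (c \<alpha>) * (?q * \<tau> powr (\<eta> / 2)))"
    unfolding mult.assoc using outside_smaller by (intro sum_mono mult_left_mono) auto
  also have "\<dots> \<le> (\<Sum>\<alpha>\<in>A. \<bar>l \<bullet> rvec \<alpha>\<bar> * norm (c \<alpha>) * (?q * \<tau> powr (\<eta> / 2)))"
    using assms(1) by (intro sum_mono2) auto
  also have "\<dots> = (\<Sum>\<alpha>\<in>A. \<bar>l \<bullet> rvec \<alpha>\<bar> * norm (c \<alpha>)) * (?q * \<tau> powr (\<eta> / 2))"
    by (rule sum_distrib_right[symmetric])
  finally have "norm (c \<beta>) * ?q \<le> ((\<Sum>\<alpha>\<in>A. \<bar>l \<bullet> rvec \<alpha>\<bar> * norm (c \<alpha>)) * \<tau> powr (\<eta> / 2)) * ?q"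
    by (simp only: ac_simps)
  then show ?thesis by (rule mult_right_le_imp_le) (use assms(2) in simp)
qed

section \<open>The limit \<open>\<tau> \<rightarrow> 0\<close>\<close>

lemma eventually_at_right_0_iff:
  "(\<forall>\<^sub>F \<tau> in at_right 0. P \<tau>) \<longleftrightarrow> (\<exists>\<tau>0>0. \<forall>\<tau>. 0 < \<tau> \<and> \<tau> < (\<tau>0::real) \<longrightarrow> P \<tau>)"
  by (auto simp: eventually_at_right_field)

lemma eventually_at_right_0_less_1: "\<forall>\<^sub>F \<tau> in at_right 0. (0::real) < \<tau> \<and> \<tau> < 1"
  unfolding eventually_at_right_0_iff by (auto intro: exI[of _ 1])

lemma tendsto_powr_at_right_0:
  assumes "a > 0"
  shows "((\<lambda>\<tau>::real. \<tau> powr a) \<longlongrightarrow> 0) (at_right 0)"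
  using assms eventually_mono[OF eventually_at_right_less[of 0] less_imp_le]
  by (intro tendsto_zero_powrI[of "\<lambda>\<tau>. \<tau>" _ "\<lambda>_. a" a] tendsto_ident_at) auto

lemma eventually_nonzero_exponents_not_near_max:
  fixes A :: "(int^'n) set"
  assumes "finite A" "\<forall>\<alpha>\<in>A. c \<alpha> \<noteq> 0" "\<eta> > 0"
    and indep: "\<forall>\<xi>. independent (rvec ` (near_max A \<rho> \<eta> \<xi> - {0}))"
  shows "\<forall>\<^sub>F \<tau> in at_right 0. \<forall>x\<in>torus. critical_point (laurent_f A c \<rho> \<tau>) x \<longrightarrow>
    (\<forall>\<beta>\<in>A - {0}. \<beta> \<notin> near_max A \<rho> (\<eta> / 2) (Log_map \<tau> x))"
proof -
  obtain C where C: "\<forall>S\<subseteq>A. \<forall>\<beta>\<in>S - {0}. independent (rvec ` (S - {0})) \<longrightarrow>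
      (\<exists>l. l \<bullet> rvec \<beta> = 1 \<and> (\<forall>\<alpha>\<in>S - {\<beta>}. l \<bullet> rvec \<alpha> = 0) \<and>
           (\<Sum>\<alpha>\<in>A. \<bar>l \<bullet> rvec \<alpha>\<bar> * norm (c \<alpha>)) \<le> C)"
    using dual_functionals_uniformly_bounded[OF assms(1), of "\<lambda>\<alpha>. norm (c \<alpha>)"] by blast
  have "((\<lambda>\<tau>. C * \<tau> powr (\<eta> / 2)) \<longlongrightarrow> 0) (at_right 0)"
    using assms(3) by (intro tendsto_mult_right_zero tendsto_powr_at_right_0) simp
  then have "\<forall>\<beta>\<in>A. \<forall>\<^sub>F \<tau> in at_right 0. C * \<tau> powr (\<eta> / 2) < norm (c \<beta>)"
    using assms(2) by (auto intro: order_tendstoD)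
  then have "\<forall>\<^sub>F \<tau> in at_right 0. \<forall>\<beta>\<in>A. C * \<tau> powr (\<eta> / 2) < norm (c \<beta>)"
    by (rule eventually_ball_finite[OF assms(1)])
  with eventually_at_right_0_less_1 show ?thesis
  proof eventually_elim
    case (elim \<tau>)
    show ?case
    proof (intro ballI impI notI)
      fix x \<beta> assume x: "x \<in> torus" "critical_point (laurent_f A c \<rho> \<tau>) x"
        and \<beta>: "\<beta> \<in> A - {0}" and near: "\<beta> \<in> near_max A \<rho> (\<eta> / 2) (Log_map \<tau> x)"
      define S where "S = near_max A \<rho> \<eta> (Log_map \<tau> x)"
      have "\<beta> \<in> S - {0}" using near near_max_mono[of "\<eta> / 2" \<eta>] assms(3) \<beta> unfolding S_def by auto
      moreover have "S \<subseteq> A" unfolding S_def near_max_def by blast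
      moreover have "independent (rvec ` (S - {0}))" using indep unfolding S_def by blast
      ultimately obtain l where l: "l \<bullet> rvec \<beta> = 1" "\<forall>\<alpha>\<in>S - {\<beta>}. l \<bullet> rvec \<alpha> = 0"
        "(\<Sum>\<alpha>\<in>A. \<bar>l \<bullet> rvec \<alpha>\<bar> * norm (c \<alpha>)) \<le> C"
        using C by blast
      have "norm (c \<beta>) \<le> (\<Sum>\<alpha>\<in>A. \<bar>l \<bullet> rvec \<alpha>\<bar> * norm (c \<alpha>)) * \<tau> powr (\<eta> / 2)"
        using near_max_term_bound[OF assms(1) _ _ _ x near l(1)] l(2) elim(1) assms(3)
        unfolding S_def by simp
      also have "\<dots> \<le> C * \<tau> powr (\<eta> / 2)" using l(3) by (simp add: mult_right_mono)
      finally show False using elim(2) \<beta> by force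
    qed
  qed
qed

lemma laurent_f_near_one:
  fixes A :: "(int^'n) set"
  assumes "finite A" "0 \<in> A" "c 0 = 1" "\<rho> 0 = 0" "x \<in> torus" "0 < \<tau>" "\<tau> < 1"
    and sep: "\<forall>\<beta>\<in>A - {0}. trop_term \<rho> (Log_map \<tau> x) \<beta> + \<delta> < trop_term \<rho> (Log_map \<tau> x) 0"
  shows "norm (laurent_f A c \<rho> \<tau> x - 1) \<le> (\<Sum>\<alpha>\<in>A - {0}. norm (c \<alpha>)) * \<tau> powr \<delta>"
proof -
  let ?m = "laurent_term c \<rho> \<tau> x"
  have "?m 0 = 1" using assms(3,4,6) by (simp add: laurent_term_def)
  then have "laurent_f A c \<rho> \<tau> x - 1 = (\<Sum>\<alpha>\<in>A - {0}. ?m \<alpha>)"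
    using assms(1,2) by (simp add: laurent_f_eq_sum sum.remove)
  then have "norm (laurent_f A c \<rho> \<tau> x - 1) \<le> (\<Sum>\<alpha>\<in>A - {0}. norm (?m \<alpha>))"
    by (simp add: norm_sum)
  also have "\<dots> \<le> (\<Sum>\<alpha>\<in>A - {0}. norm (c \<alpha>) * \<tau> powr \<delta>)"
  proof (rule sum_mono)
    fix \<alpha> assume "\<alpha> \<in> A - {0}"
    then have "\<delta> \<le> - trop_term \<rho> (Log_map \<tau> x) \<alpha>"
      using sep assms(4) by (force simp: trop_term_def)
    then have "\<tau> powr (- trop_term \<rho> (Log_map \<tau> x) \<alpha>) \<le> \<tau> powr \<delta>"
      using assms(6,7) by (simp add: powr_mono')
    then show "norm (?m \<alpha>) \<le> norm (c \<alpha>) * \<tau> powr \<delta>"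
      using norm_laurent_term[OF assms(5-7)] by (simp add: mult_left_mono)
  qed
  also have "\<dots> = (\<Sum>\<alpha>\<in>A - {0}. norm (c \<alpha>)) * \<tau> powr \<delta>"
    by (simp add: sum_distrib_right)
  finally show ?thesis .
qed

lemma eventually_critical_values_near_one:
  fixes A :: "(int^'n) set"
  assumes "finite A" "0 \<in> A" "c 0 = 1" "\<rho> 0 = 0" "\<delta> > 0" "\<epsilon> > 0"
    and sep: "\<forall>\<^sub>F \<tau> in at_right 0. \<forall>x\<in>torus. critical_point (laurent_f A c \<rho> \<tau>) x \<longrightarrow>
      (\<forall>\<beta>\<in>A - {0}. trop_term \<rho> (Log_map \<tau> x) \<beta> + \<delta> < trop_term \<rho> (Log_map \<tau> x) 0)"
  shows "\<forall>\<^sub>F \<tau> in at_right 0. \<forall>x\<in>torus. critical_point (laurent_f A c \<rho> \<tau>) x \<longrightarrow>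
      norm (laurent_f A c \<rho> \<tau> x - 1) < \<epsilon>"
proof -
  have "((\<lambda>\<tau>. (\<Sum>\<alpha>\<in>A - {0}. norm (c \<alpha>)) * \<tau> powr \<delta>) \<longlongrightarrow> 0) (at_right 0)"
    using assms(5) by (intro tendsto_mult_right_zero tendsto_powr_at_right_0)
  then have "\<forall>\<^sub>F \<tau> in at_right 0. (\<Sum>\<alpha>\<in>A - {0}. norm (c \<alpha>)) * \<tau> powr \<delta> < \<epsilon>"
    using assms(6) by (rule order_tendstoD(2))
  with eventually_at_right_0_less_1 sep show ?thesis
  proof eventually_elim
    case (elim \<tau>)
    then show ?case
      using laurent_f_near_one[where c = c and \<rho> = \<rho>, OF assms(1-4)] by fastforce
  qed
qed

theorem lemma5p2:
  fixes A :: "(int^'n) set" and c :: "int^'n \<Rightarrow> complex"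
    and \<rho> :: "int^'n \<Rightarrow> real" and \<rho>h :: "real^'n \<Rightarrow> real"
  defines "K \<equiv> convex hull (rvec ` A)"
  defines "P \<equiv> max_lin_domains \<rho>h K"
  assumes finA: "finite A" and zeroA: "0 \<in> A"
    and c_nz: "\<forall>\<alpha>\<in>A. c \<alpha> \<noteq> 0"
    and rho_restr: "\<forall>\<alpha>\<in>A. \<rho> \<alpha> = \<rho>h (rvec \<alpha>)"
    and convex_rho: "convex_on K \<rho>h"
    and pl_finite: "finite P"
    and pl_cover: "\<Union>P = K"
    and decomp_faces: "\<forall>D1\<in>P. \<forall>D2\<in>P. (D1 \<inter> D2) face_of D1"
    and vertices: "(\<Union>D\<in>P. {v. v extreme_point_of D}) = rvec ` A"
    and unimodular: "\<forall>D\<in>P. \<forall>F. F face_of D \<and> F \<noteq> {} \<longrightarrow>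
                       (\<exists>J. lattice_congruent F (std_simplex J))"
    and normalized: "c 0 = 1" "\<rho> 0 = 0"
    and zero_vertex: "\<forall>D\<in>P. rvec 0 extreme_point_of D"
  shows "(\<exists>\<tau>0>0. \<forall>\<tau>. 0 < \<tau> \<and> \<tau> < \<tau>0 \<longrightarrow>
            (\<forall>x\<in>torus. critical_point (laurent_f A c \<rho> \<tau>) x \<longrightarrow> x \<in> U0 A \<rho> \<tau>))
       \<and> (\<forall>\<epsilon>>0. \<exists>\<tau>0>0. \<forall>\<tau>. 0 < \<tau> \<and> \<tau> < \<tau>0 \<longrightarrow>
            (\<forall>x\<in>torus. critical_point (laurent_f A c \<rho> \<tau>) x \<longrightarrow>
                 norm (laurent_f A c \<rho> \<tau> x - 1) < \<epsilon>))"
proof -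
  have "independent (rvec ` (near_max A \<rho> 0 \<xi> - {0}))" for \<xi>
    using rho_restr convex_rho pl_cover decomp_faces vertices unimodular zero_vertex
    unfolding K_def P_def by (rule maximizers_independent)
  then obtain \<eta> where "\<eta> > 0" and indep: "\<forall>\<xi>. independent (rvec ` (near_max A \<rho> \<eta> \<xi> - {0}))"
    using near_maximizers_independent[OF finA] by blast
  have sep: "\<forall>\<^sub>F \<tau> in at_right 0. \<forall>x\<in>torus. critical_point (laurent_f A c \<rho> \<tau>) x \<longrightarrow>
      (\<forall>\<beta>\<in>A - {0}. trop_term \<rho> (Log_map \<tau> x) \<beta> + \<eta> / 2 < trop_term \<rho> (Log_map \<tau> x) 0)"
    using eventually_nonzero_exponents_not_near_max[OF finA c_nz \<open>\<eta> > 0\<close> indep]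
    by (rule eventually_mono)
      (use origin_strictly_dominant[OF finA zeroA, of "\<eta> / 2"] \<open>\<eta> > 0\<close> in auto)
  then have "\<forall>\<^sub>F \<tau> in at_right 0. \<forall>x\<in>torus. critical_point (laurent_f A c \<rho> \<tau>) x \<longrightarrow> x \<in> U0 A \<rho> \<tau>"
    by (rule eventually_mono) (use \<open>\<eta> > 0\<close> in \<open>force simp: U0_def Delta0_def trop_term_def\<close>)
  moreover have "\<forall>\<^sub>F \<tau> in at_right 0. \<forall>x\<in>torus. critical_point (laurent_f A c \<rho> \<tau>) x \<longrightarrow>
      norm (laurent_f A c \<rho> \<tau> x - 1) < \<epsilon>" if "\<epsilon> > 0" for \<epsilon>
    using eventually_critical_values_near_one[OF finA zeroA normalized _ that sep] \<open>\<eta> > 0\<close> by simp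
  ultimately show ?thesis unfolding eventually_at_right_0_iff by blast
qed

end
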